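(* Let $\mathcal A$ be a regular multiplier Hopf algebroid with a modular base weight $(\mu_B,\mu_C)$ and antipode $S$. Let $\phi$ be a left integral and $\psi$ a right integral for $(\mathcal A,\mu_B,\mu_C)$. Then for all $a\in A$, $x\in B$, $y\in C$: $$\phi(ya)=\phi(a\,S^2(y))\qquad\text{and}\qquad \psi(ax)=\psi(S^2(x)\,a).$$
   Context: A regular multiplier Hopf algebroid $\mathcal A=(A,B,C,S_B,S_C,\Delta_B,\Delta_C)$ (Timmermann–Van Daele) consists of a non-degenerate idempotent complex algebra $A$, non-degenerate idempotent commuting subalgebras $B,C\subseteq M(A)$, anti-isomorphisms $S_B:B\to C$, $S_C:C\to B$, a left comultiplication $\Delta_B$ and right comultiplication $\Delta_C$ satisfying the axioms of that notion; its antipode $S$ is an anti-automorphism of $A$ extending to $M(A)$ with $S|_B=S_B$, $S|_C=S_C$. ${}_BA\otimes A^B$ is the quotient of $A\otimes A$ by the span of $xa\otimes b-a\otimes S_B(x)b$; slice maps: for $\omega:A\to B$ with $\omega(xa)=x\omega(a)$, $\omega\otimes\iota:c\otimes d\mapsto S_B(\omega(c))d$; for $\omega:A\to B$ with $\omega(S_B(x)a)=\omega(a)x$, $\iota\otimes\omega:c\otimes d\mapsto\omega(d)c$. Partial right integral: linear ${}_B\psi_B:A\to B$ with ${}_B\psi_B(xax')=x{}_B\psi_B(a)x'$ and $({}_B\psi_B\otimes\iota)(\Delta_B(a)(1\otimes b))={}_B\psi_B(a)b$. Partial left integral: linear ${}_C\phi_C:A\to C$ with ${}_C\phi_C(yay')=y{}_C\phi_C(a)y'$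 and $(\iota\otimes S_B^{-1}\circ{}_C\phi_C)(\Delta_B(b)(a\otimes1))={}_C\phi_C(b)a$. A base weight is a pair $(\mu_B,\mu_C)$ of faithful linear functionals on $B$, $C$; it is modular if $\mu_B(xx')=\mu_B(x'\,S_B^{-1}S_C^{-1}(x))$ and $\mu_C(yy')=\mu_C(y'\,S_BS_C(y))$ for all $x,x'\in B$, $y,y'\in C$. A functional $\omega$ on $A$ is factorizable if there are linear ${}_B\omega,\omega_B:A\to B$, ${}_C\omega,\omega_C:A\to C$ with ${}_B\omega(xa)=x{}_B\omega(a)$, $\omega_B(ax)=\omega_B(a)x$, ${}_C\omega(ya)=y{}_C\omega(a)$, $\omega_C(ay)=\omega_C(a)y$ and $\omega=\mu_B\circ{}_B\omega=\mu_B\circ\omega_B=\mu_C\circ{}_C\omega=\mu_C\circ\omega_C$. A left integral is a factorizable functional $\mu_C\circ{}_C\phi_C$ with ${}_C\phi_C$ a partial left integral; a right integral is a factorizable functional $\mu_B\circ{}_B\psi_B$ with ${}_B\psi_B$ a partial right integral. *)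

theory Defs
  imports Main Complex_Main
begin

text \<open>Ambient: a unital ring 'm with a complex scalar multiplication sc making it a
complex algebra. 'm plays the role of the multiplier algebra M(A); A is a subset of 'm.\<close>

definition cplx_alg :: "(complex \<Rightarrow> 'm::ring_1 \<Rightarrow> 'm) \<Rightarrow> bool" where
  "cplx_alg sc \<longleftrightarrow> module sc \<and>
     (\<forall>c x y. sc c (x * y) = sc c x * y \<and> sc c (x * y) = x * sc c y)"

definition subalg :: "(complex \<Rightarrow> 'm::ring_1 \<Rightarrow> 'm) \<Rightarrow> 'm set \<Rightarrow> bool" where
  "subalg sc X \<longleftrightarrow> module.subspace sc X \<and> (\<forall>x\<in>X. \<forall>y\<in>X. x * y \<in> X)"

definition idempotent_alg :: "(complex \<Rightarrow> 'm::ring_1 \<Rightarrow> 'm) \<Rightarrow> 'm set \<Rightarrow> bool" where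
  "idempotent_alg sc X \<longleftrightarrow> X \<subseteq> module.span sc {x * y | x y. x \<in> X \<and> y \<in> X}"

definition nondeg_alg :: "'m::ring_1 set \<Rightarrow> bool" where
  "nondeg_alg X \<longleftrightarrow> (\<forall>x\<in>X. (\<forall>y\<in>X. x * y = 0) \<longrightarrow> x = 0) \<and>
                     (\<forall>x\<in>X. (\<forall>y\<in>X. y * x = 0) \<longrightarrow> x = 0)"

text \<open>'m is (isomorphic to) the multiplier algebra M(A) of the non-degenerate idempotent
algebra A: A is a two-sided ideal of 'm, essential on both sides (so the canonical
map 'm -> double centralizers is injective), and every double centralizer (l,r) of A
is given by an element of 'm (surjectivity).\<close>

definition is_multiplier_algebra :: "(complex \<Rightarrow> 'm::ring_1 \<Rightarrow> 'm) \<Rightarrow> 'm set \<Rightarrow> bool" where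
  "is_multiplier_algebra sc A \<longleftrightarrow>
     cplx_alg sc \<and> subalg sc A \<and> nondeg_alg A \<and> idempotent_alg sc A \<and>
     (\<forall>m. \<forall>a\<in>A. m * a \<in> A \<and> a * m \<in> A) \<and>
     (\<forall>m. (\<forall>a\<in>A. m * a = 0) \<longrightarrow> m = 0) \<and>
     (\<forall>m. (\<forall>a\<in>A. a * m = 0) \<longrightarrow> m = 0) \<and>
     (\<forall>l r. (\<forall>a\<in>A. l a \<in> A \<and> r a \<in> A) \<and> (\<forall>a\<in>A. \<forall>b\<in>A. a * l b = r a * b)
        \<longrightarrow> (\<exists>m. \<forall>a\<in>A. l a = m * a \<and> r a = a * m))"

definition lin_fun :: "(complex \<Rightarrow> 'm::ring_1 \<Rightarrow> 'm) \<Rightarrow> 'm set \<Rightarrow> ('m \<Rightarrow> complex) \<Rightarrow> bool" where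
  "lin_fun sc X f \<longleftrightarrow> (\<forall>x\<in>X. \<forall>y\<in>X. f (x + y) = f x + f y) \<and> (\<forall>c. \<forall>x\<in>X. f (sc c x) = c * f x)"

definition lin_map :: "(complex \<Rightarrow> 'm::ring_1 \<Rightarrow> 'm) \<Rightarrow> 'm set \<Rightarrow> 'm set \<Rightarrow> ('m \<Rightarrow> 'm) \<Rightarrow> bool" where
  "lin_map sc X Y f \<longleftrightarrow> (\<forall>x\<in>X. f x \<in> Y) \<and> (\<forall>x\<in>X. \<forall>y\<in>X. f (x + y) = f x + f y) \<and>
     (\<forall>c. \<forall>x\<in>X. f (sc c x) = sc c (f x))"

definition anti_iso :: "(complex \<Rightarrow> 'm::ring_1 \<Rightarrow> 'm) \<Rightarrow> 'm set \<Rightarrow> 'm set \<Rightarrow> ('m \<Rightarrow> 'm) \<Rightarrow> bool" where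
  "anti_iso sc X Y f \<longleftrightarrow> lin_map sc X Y f \<and> bij_betw f X Y \<and>
     (\<forall>x\<in>X. \<forall>y\<in>X. f (x * y) = f y * f x)"

definition base_data ::
  "(complex \<Rightarrow> 'm::ring_1 \<Rightarrow> 'm) \<Rightarrow> 'm set \<Rightarrow> 'm set \<Rightarrow> 'm set \<Rightarrow>
   ('m \<Rightarrow> 'm) \<Rightarrow> ('m \<Rightarrow> 'm) \<Rightarrow> ('m \<Rightarrow> 'm) \<Rightarrow> bool" where
  "base_data sc A B C SB SC S \<longleftrightarrow>
     is_multiplier_algebra sc A \<and>
     subalg sc B \<and> nondeg_alg B \<and> idempotent_alg sc B \<and>
     subalg sc C \<and> nondeg_alg C \<and> idempotent_alg sc C \<and>
     (\<forall>x\<in>B. \<forall>y\<in>C. x * y = y * x) \<and>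
     anti_iso sc B C SB \<and> anti_iso sc C B SC \<and>
     anti_iso sc UNIV UNIV S \<and> S ` A = A \<and>
     (\<forall>x\<in>B. S x = SB x) \<and> (\<forall>y\<in>C. S y = SC y)"

definition faithful_fun :: "(complex \<Rightarrow> 'm::ring_1 \<Rightarrow> 'm) \<Rightarrow> 'm set \<Rightarrow> ('m \<Rightarrow> complex) \<Rightarrow> bool" where
  "faithful_fun sc X mu \<longleftrightarrow> lin_fun sc X mu \<and>
     (\<forall>x\<in>X. (\<forall>y\<in>X. mu (x * y) = 0) \<longrightarrow> x = 0) \<and>
     (\<forall>x\<in>X. (\<forall>y\<in>X. mu (y * x) = 0) \<longrightarrow> x = 0)"

definition modular_base_weight ::
  "(complex \<Rightarrow> 'm::ring_1 \<Rightarrow> 'm) \<Rightarrow> 'm set \<Rightarrow> 'm set \<Rightarrow> ('m \<Rightarrow> 'm) \<Rightarrow> ('m \<Rightarrow> 'm) \<Rightarrow>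
   ('m \<Rightarrow> complex) \<Rightarrow> ('m \<Rightarrow> complex) \<Rightarrow> bool" where
  "modular_base_weight sc B C SB SC muB muC \<longleftrightarrow>
     faithful_fun sc B muB \<and> faithful_fun sc C muC \<and>
     (\<forall>x\<in>B. \<forall>x'\<in>B. muB (x * x') = muB (x' * the_inv_into B SB (the_inv_into C SC x))) \<and>
     (\<forall>y\<in>C. \<forall>y'\<in>C. muC (y * y') = muC (y' * SB (SC y)))"

definition factorizable ::
  "(complex \<Rightarrow> 'm::ring_1 \<Rightarrow> 'm) \<Rightarrow> 'm set \<Rightarrow> 'm set \<Rightarrow> 'm set \<Rightarrow>
   ('m \<Rightarrow> complex) \<Rightarrow> ('m \<Rightarrow> complex) \<Rightarrow> ('m \<Rightarrow> complex) \<Rightarrow> bool" where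
  "factorizable sc A B C muB muC om \<longleftrightarrow> lin_fun sc A om \<and>
     (\<exists>Bom omB Com omC.
        lin_map sc A B Bom \<and> lin_map sc A B omB \<and> lin_map sc A C Com \<and> lin_map sc A C omC \<and>
        (\<forall>x\<in>B. \<forall>a\<in>A. Bom (x * a) = x * Bom a \<and> omB (a * x) = omB a * x) \<and>
        (\<forall>y\<in>C. \<forall>a\<in>A. Com (y * a) = y * Com a \<and> omC (a * y) = omC a * y) \<and>
        (\<forall>a\<in>A. om a = muB (Bom a) \<and> om a = muB (omB a) \<and>
                 om a = muC (Com a) \<and> om a = muC (omC a)))"

text \<open>Elements of the balanced tensor product B-A-tensor-A-B are represented by finite
formal sums (lists of pairs c_i (x) d_i); the slice maps are evaluated on representatives
(they are well defined on the quotient by the module properties of the slicing map).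
DBr a b represents Delta_B(a)(1 (x) b); DBl b a represents Delta_B(b)(a (x) 1).\<close>

definition partial_right_integral ::
  "'m::ring_1 set \<Rightarrow> 'm set \<Rightarrow> ('m \<Rightarrow> 'm) \<Rightarrow> (complex \<Rightarrow> 'm \<Rightarrow> 'm) \<Rightarrow>
   ('m \<Rightarrow> 'm \<Rightarrow> ('m \<times> 'm) list) \<Rightarrow> ('m \<Rightarrow> 'm) \<Rightarrow> bool" where
  "partial_right_integral A B SB sc DBr psiB \<longleftrightarrow> lin_map sc A B psiB \<and>
     (\<forall>x\<in>B. \<forall>a\<in>A. psiB (x * a) = x * psiB a \<and> psiB (a * x) = psiB a * x) \<and>
     (\<forall>a\<in>A. \<forall>b\<in>A. (\<Sum>(c, d)\<leftarrow>DBr a b. SB (psiB c) * d) = psiB a * b)"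

definition partial_left_integral ::
  "'m::ring_1 set \<Rightarrow> 'm set \<Rightarrow> 'm set \<Rightarrow> ('m \<Rightarrow> 'm) \<Rightarrow> (complex \<Rightarrow> 'm \<Rightarrow> 'm) \<Rightarrow>
   ('m \<Rightarrow> 'm \<Rightarrow> ('m \<times> 'm) list) \<Rightarrow> ('m \<Rightarrow> 'm) \<Rightarrow> bool" where
  "partial_left_integral A B C SB sc DBl phiC \<longleftrightarrow> lin_map sc A C phiC \<and>
     (\<forall>y\<in>C. \<forall>a\<in>A. phiC (y * a) = y * phiC a \<and> phiC (a * y) = phiC a * y) \<and>
     (\<forall>b\<in>A. \<forall>a\<in>A. (\<Sum>(c, d)\<leftarrow>DBl b a. the_inv_into B SB (phiC d) * c) = phiC b * a)"

definition left_integral where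
  "left_integral sc A B C SB muB muC DBl phi \<longleftrightarrow> factorizable sc A B C muB muC phi \<and>
     (\<exists>phiC. partial_left_integral A B C SB sc DBl phiC \<and> (\<forall>a\<in>A. phi a = muC (phiC a)))"

definition right_integral where
  "right_integral sc A B C SB muB muC DBr psi \<longleftrightarrow> factorizable sc A B C muB muC psi \<and>
     (\<exists>psiB. partial_right_integral A B SB sc DBr psiB \<and> (\<forall>a\<in>A. psi a = muB (psiB a)))"

end

theory Submission
  imports Defs
begin

text \<open>Modularity of the base weight says that \<open>\<mu>\<^sub>C\<close> is a trace up to the twist \<open>S\<^sub>B S\<^sub>C = S\<^sup>2\<close>
on \<open>C\<close>, and dually for \<open>\<mu>\<^sub>B\<close> with \<open>S\<^sup>2\<close> on \<open>B\<close>. A left (right) integral is this base weight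
composed with a partial integral, which is a bimodule map over the base algebra, so the twist
passes from the base weight to the integral. Only the module property of the partial
integrals enters, not their invariance.\<close>

lemma bimodule_functional_twist_left:
  fixes f :: "'m::ring_1 \<Rightarrow> 'm"
  assumes A_ideal: "\<forall>m. \<forall>a\<in>A. m * a \<in> A \<and> a * m \<in> A"
    and f_into: "\<forall>a\<in>A. f a \<in> C"
    and f_bimodule: "\<forall>y\<in>C. \<forall>a\<in>A. f (y * a) = y * f a \<and> f (a * y) = f a * y"
    and om_eq: "\<forall>a\<in>A. om a = mu (f a)"
    and mu_modular: "\<forall>y\<in>C. \<forall>y'\<in>C. mu (y * y') = mu (y' * \<sigma> y)"
    and a: "a \<in> A" and y: "y \<in> C" and \<sigma>y: "\<sigma> y \<in> C"
  shows "om (y * a) = om (a * \<sigma> y)"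
proof -
  have "om (y * a) = mu (y * f a)"
    using A_ideal om_eq f_bimodule a y by simp
  also have "\<dots> = mu (f a * \<sigma> y)"
    using mu_modular f_into a y by simp
  also have "\<dots> = om (a * \<sigma> y)"
    using A_ideal om_eq f_bimodule a \<sigma>y by simp
  finally show ?thesis .
qed

lemma bimodule_functional_twist_right:
  fixes f :: "'m::ring_1 \<Rightarrow> 'm"
  assumes A_ideal: "\<forall>m. \<forall>a\<in>A. m * a \<in> A \<and> a * m \<in> A"
    and f_into: "\<forall>a\<in>A. f a \<in> B"
    and f_bimodule: "\<forall>x\<in>B. \<forall>a\<in>A. f (x * a) = x * f a \<and> f (a * x) = f a * x"
    and om_eq: "\<forall>a\<in>A. om a = mu (f a)"
    and mu_modular: "\<forall>x\<in>B. \<forall>x'\<in>B. mu (x' * x) = mu (\<tau> x * x')"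
    and a: "a \<in> A" and x: "x \<in> B" and \<tau>x: "\<tau> x \<in> B"
  shows "om (a * x) = om (\<tau> x * a)"
proof -
  have "om (a * x) = mu (f a * x)"
    using A_ideal om_eq f_bimodule a x by simp
  also have "\<dots> = mu (\<tau> x * f a)"
    using mu_modular f_into a x by simp
  also have "\<dots> = om (\<tau> x * a)"
    using A_ideal om_eq f_bimodule a \<tau>x by simp
  finally show ?thesis .
qed

lemma base_data_ideal:
  assumes "base_data sc A B C SB SC S"
  shows "\<forall>m. \<forall>a\<in>A. m * a \<in> A \<and> a * m \<in> A"
  using assms unfolding base_data_def is_multiplier_algebra_def by (elim conjE)

lemma base_data_base_maps:
  assumes "base_data sc A B C SB SC S"
  shows "\<forall>x\<in>B. SB x \<in> C" "\<forall>y\<in>C. SC y \<in> B" "inj_on SB B" "inj_on SC C"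
    and "\<forall>x\<in>B. S x = SB x" "\<forall>y\<in>C. S y = SC y"
proof -
  from assms have "anti_iso sc B C SB" "anti_iso sc C B SC" "\<forall>x\<in>B. S x = SB x" "\<forall>y\<in>C. S y = SC y"
    unfolding base_data_def by simp_all
  then show "\<forall>x\<in>B. SB x \<in> C" "\<forall>y\<in>C. SC y \<in> B" "inj_on SB B" "inj_on SC C"
    and "\<forall>x\<in>B. S x = SB x" "\<forall>y\<in>C. S y = SC y"
    unfolding anti_iso_def lin_map_def bij_betw_def by simp_all
qed

lemma base_data_antipode_squared_C:
  assumes "base_data sc A B C SB SC S" and "y \<in> C"
  shows "S (S y) = SB (SC y)" and "SB (SC y) \<in> C"
  using base_data_base_maps[OF assms(1)] assms(2) by simp_all

lemma base_data_antipode_squared_B: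
  assumes "base_data sc A B C SB SC S" and "x \<in> B"
  shows "S (S x) = SC (SB x)" and "SC (SB x) \<in> B"
  using base_data_base_maps[OF assms(1)] assms(2) by simp_all

lemma modular_base_weight_C:
  assumes "modular_base_weight sc B C SB SC muB muC"
  shows "\<forall>y\<in>C. \<forall>y'\<in>C. muC (y * y') = muC (y' * SB (SC y))"
  using assms unfolding modular_base_weight_def by (elim conjE)

text \<open>The modularity condition on \<open>\<mu>\<^sub>B\<close> is stated with \<open>S\<^sub>B\<^sup>-\<^sup>1 S\<^sub>C\<^sup>-\<^sup>1\<close>; substituting
\<open>S\<^sub>C S\<^sub>B x\<close> for its first argument turns it into a twist by \<open>S\<^sup>2\<close> from the left.\<close>

lemma modular_base_weight_B:
  assumes "base_data sc A B C SB SC S" and "modular_base_weight sc B C SB SC muB muC"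
  shows "\<forall>x\<in>B. \<forall>x'\<in>B. muB (x' * x) = muB (SC (SB x) * x')"
proof (intro ballI)
  fix x x' assume x: "x \<in> B" and x': "x' \<in> B"
  note SB = base_data_base_maps(3,1)[OF assms(1)] and SC = base_data_base_maps(4)[OF assms(1)]
  have "the_inv_into B SB (the_inv_into C SC (SC (SB x))) = x"
    using the_inv_into_f_f[OF SC(1)] the_inv_into_f_f[OF SB(1)] SB(2) x by simp
  moreover have "\<forall>x\<in>B. \<forall>x'\<in>B. muB (x * x') = muB (x' * the_inv_into B SB (the_inv_into C SC x))"
    using assms(2) unfolding modular_base_weight_def by (elim conjE)
  ultimately show "muB (x' * x) = muB (SC (SB x) * x')"
    using base_data_antipode_squared_B(2)[OF assms(1) x] x' by metis
qed

lemma partial_left_integral_bimodule: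
  assumes "partial_left_integral A B C SB sc DBl phiC"
  shows "\<forall>a\<in>A. phiC a \<in> C" and "\<forall>y\<in>C. \<forall>a\<in>A. phiC (y * a) = y * phiC a \<and> phiC (a * y) = phiC a * y"
  using assms unfolding partial_left_integral_def lin_map_def by blast+

lemma partial_right_integral_bimodule:
  assumes "partial_right_integral A B SB sc DBr psiB"
  shows "\<forall>a\<in>A. psiB a \<in> B" and "\<forall>x\<in>B. \<forall>a\<in>A. psiB (x * a) = x * psiB a \<and> psiB (a * x) = psiB a * x"
  using assms unfolding partial_right_integral_def lin_map_def by blast+

lemma left_integral_antipode_squared:
  assumes bd: "base_data sc A B C SB SC S"
    and mw: "modular_base_weight sc B C SB SC muB muC"
    and li: "left_integral sc A B C SB muB muC DBl phi"
    and a: "a \<in> A" and y: "y \<in> C"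
  shows "phi (y * a) = phi (a * S (S y))"
proof -
  obtain phiC where phiC: "partial_left_integral A B C SB sc DBl phiC"
    and phi: "\<forall>a\<in>A. phi a = muC (phiC a)"
    using li unfolding left_integral_def by blast
  show ?thesis
    using bimodule_functional_twist_left[OF base_data_ideal[OF bd]
        partial_left_integral_bimodule[OF phiC] phi modular_base_weight_C[OF mw] a y
        base_data_antipode_squared_C(2)[OF bd y]]
    by (simp only: base_data_antipode_squared_C(1)[OF bd y])
qed

lemma right_integral_antipode_squared:
  assumes bd: "base_data sc A B C SB SC S"
    and mw: "modular_base_weight sc B C SB SC muB muC"
    and ri: "right_integral sc A B C SB muB muC DBr psi"
    and a: "a \<in> A" and x: "x \<in> B"
  shows "psi (a * x) = psi (S (S x) * a)"
proof -
  obtain psiB where psiB: "partial_right_integral A B SB sc DBr psiB"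
    and psi: "\<forall>a\<in>A. psi a = muB (psiB a)"
    using ri unfolding right_integral_def by blast
  show ?thesis
    using bimodule_functional_twist_right[OF base_data_ideal[OF bd]
        partial_right_integral_bimodule[OF psiB] psi modular_base_weight_B[OF bd mw] a x
        base_data_antipode_squared_B(2)[OF bd x]]
    by (simp only: base_data_antipode_squared_B(1)[OF bd x])
qed

theorem lemma4p10:
  fixes sc :: "complex \<Rightarrow> 'm::ring_1 \<Rightarrow> 'm"
    and A B C :: "'m set"
    and SB SC S :: "'m \<Rightarrow> 'm"
    and DBr DBl :: "'m \<Rightarrow> 'm \<Rightarrow> ('m \<times> 'm) list"
    and muB muC phi psi :: "'m \<Rightarrow> complex"
  assumes "base_data sc A B C SB SC S"
    and "\<forall>a\<in>A. \<forall>b\<in>A. set (DBr a b) \<subseteq> A \<times> A \<and> set (DBl a b) \<subseteq> A \<times> A"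
    and "modular_base_weight sc B C SB SC muB muC"
    and "left_integral sc A B C SB muB muC DBl phi"
    and "right_integral sc A B C SB muB muC DBr psi"
  shows "\<forall>a\<in>A. \<forall>x\<in>B. \<forall>y\<in>C.
           phi (y * a) = phi (a * S (S y)) \<and> psi (a * x) = psi (S (S x) * a)"
  using left_integral_antipode_squared[OF assms(1,3,4)]
    right_integral_antipode_squared[OF assms(1,3,5)] by blast

end
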